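(* Let $(X,\le)$ be a non-empty strictly inductive poset, $f:X\to X$ and $a_0\in X$ with $a_0\le f(a_0)$. Let $W$ be the set of elements of $X$ that are the least upper bound of some $a_0$-chain. If $f$ is monotone on $W$ (i.e. $f(x)\le f(y)$ for all $x,y\in W$ with $x\le y$), then $\mathrm{lub}(W)$ exists and is a fixpoint of $f$.
   Context: A poset is strictly inductive if every non-empty chain (totally ordered subset) has a least upper bound $\mathrm{lub}$ in $X$. A subset $C\subseteq X$ is an $a_0$-chain (with respect to $f$) if: $C$ is well ordered by $\le$; $a_0$ is the least element of $C$; for every non-empty $P\subseteq C$, $\mathrm{lub}(P)$ exists and belongs to $C$; and for every $z\in C\setminus\{\mathrm{lub}(C)\}$ we have $f(z)\in C$, $z<f(z)$, and there is no $y\in C$ with $z<y<f(z)$. *)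

theory Defs
  imports Main
begin

definition is_lub_in :: "'a::order set \<Rightarrow> 'a set \<Rightarrow> 'a \<Rightarrow> bool" where
  "is_lub_in X P x \<longleftrightarrow> x \<in> X \<and> (\<forall>p\<in>P. p \<le> x) \<and> (\<forall>y\<in>X. (\<forall>p\<in>P. p \<le> y) \<longrightarrow> x \<le> y)"

definition lub_in :: "'a::order set \<Rightarrow> 'a set \<Rightarrow> 'a" where
  "lub_in X P = (THE x. is_lub_in X P x)"

definition is_chain :: "'a::order set \<Rightarrow> bool" where
  "is_chain C \<longleftrightarrow> (\<forall>x\<in>C. \<forall>y\<in>C. x \<le> y \<or> y \<le> x)"

definition strictly_inductive :: "'a::order set \<Rightarrow> bool" where
  "strictly_inductive X \<longleftrightarrow>
     (\<forall>C. C \<subseteq> X \<and> C \<noteq> {} \<and> is_chain C \<longrightarrow> (\<exists>x. is_lub_in X C x))"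

definition well_ordered_set :: "'a::order set \<Rightarrow> bool" where
  "well_ordered_set C \<longleftrightarrow> is_chain C \<and>
     (\<forall>P. P \<subseteq> C \<and> P \<noteq> {} \<longrightarrow> (\<exists>m\<in>P. \<forall>p\<in>P. m \<le> p))"

definition a0_chain :: "'a::order set \<Rightarrow> ('a \<Rightarrow> 'a) \<Rightarrow> 'a \<Rightarrow> 'a set \<Rightarrow> bool" where
  "a0_chain X f a0 C \<longleftrightarrow>
     C \<subseteq> X \<and> well_ordered_set C \<and>
     a0 \<in> C \<and> (\<forall>c\<in>C. a0 \<le> c) \<and>
     (\<forall>P. P \<subseteq> C \<and> P \<noteq> {} \<longrightarrow> (\<exists>x. is_lub_in X P x) \<and> lub_in X P \<in> C) \<and>
     (\<forall>z \<in> C - {lub_in X C}. f z \<in> C \<and> z < f z \<and> \<not> (\<exists>y\<in>C. z < y \<and> y < f z))"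

end

theory Submission imports Defs begin

text \<open>Any two \<open>a0\<close>-chains are comparable: one is an initial segment of the other. Hence the
  union \<open>U\<close> of all \<open>a0\<close>-chains is well ordered, and since every element of an \<open>a0\<close>-chain is the
  lub of the initial segment it closes, which is again an \<open>a0\<close>-chain, \<open>U = W\<close>. Adjoining
  \<open>lub U\<close> to \<open>U\<close> gives an \<open>a0\<close>-chain, so \<open>lub U \<in> U\<close> and \<open>U\<close> is the largest \<open>a0\<close>-chain.
  Monotonicity of \<open>f\<close> on \<open>U\<close> yields \<open>lub U \<le> f (lub U)\<close>, and a strict inequality would let
  us extend \<open>U\<close> by \<open>f (lub U)\<close>.\<close>

lemma lub_in_eqI: "is_lub_in X P x \<Longrightarrow> lub_in X P = x"
  unfolding lub_in_def
  by (rule the_equality) (auto simp: is_lub_in_def intro: order.antisym)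

lemma is_lub_in_lub_in: "is_lub_in X P x \<Longrightarrow> is_lub_in X P (lub_in X P)"
  using lub_in_eqI by metis

lemma is_lub_in_upper: "is_lub_in X P x \<Longrightarrow> p \<in> P \<Longrightarrow> p \<le> x"
  and is_lub_in_least: "is_lub_in X P x \<Longrightarrow> y \<in> X \<Longrightarrow> (\<And>p. p \<in> P \<Longrightarrow> p \<le> y) \<Longrightarrow> x \<le> y"
  unfolding is_lub_in_def by blast+

lemma is_lub_in_greatest: "x \<in> X \<Longrightarrow> x \<in> P \<Longrightarrow> \<forall>p\<in>P. p \<le> x \<Longrightarrow> is_lub_in X P x"
  unfolding is_lub_in_def by blast

lemma is_lub_in_cofinal:
  assumes "is_lub_in X A w" "is_chain A" "P \<subseteq> A" "\<not> (\<exists>c\<in>A. \<forall>p\<in>P. p \<le> c)"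
  shows "is_lub_in X P w"
  unfolding is_lub_in_def
proof (intro conjI ballI impI)
  show "w \<in> X" using assms(1) unfolding is_lub_in_def by blast
  show "p \<le> w" if "p \<in> P" for p using is_lub_in_upper[OF assms(1)] assms(3) that by blast
  fix y assume y: "y \<in> X" "\<forall>p\<in>P. p \<le> y"
  have "c \<le> y" if "c \<in> A" for c
  proof -
    obtain p where "p \<in> P" "\<not> p \<le> c" using assms(4) \<open>c \<in> A\<close> by blast
    then have "c \<le> p" using assms(2,3) \<open>c \<in> A\<close> unfolding is_chain_def by blast
    then show ?thesis using y \<open>p \<in> P\<close> by (meson order.trans)
  qed
  then show "w \<le> y" by (rule is_lub_in_least[OF assms(1) y(1)])
qed

lemma chain_below_lub_le_member:
  assumes "is_chain C" "C \<subseteq> X" "I \<subseteq> C" "is_lub_in X I s" "y \<in> C" "y < s"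
  shows "\<exists>i\<in>I. y \<le> i"
proof (rule ccontr)
  assume "\<not> ?thesis"
  then have "\<forall>i\<in>I. i \<le> y" using assms(1,3,5) unfolding is_chain_def by blast
  then have "s \<le> y" using is_lub_in_least[OF assms(4)] assms(2,5) by blast
  then show False using \<open>y < s\<close> by simp
qed

lemma well_ordered_set_insert_upper:
  assumes "well_ordered_set A" "\<forall>a\<in>A. a \<le> w"
  shows "well_ordered_set (insert w A)"
  unfolding well_ordered_set_def
proof (intro conjI allI impI)
  show "is_chain (insert w A)"
    using assms unfolding well_ordered_set_def is_chain_def by blast
  fix P assume P: "P \<subseteq> insert w A \<and> P \<noteq> {}"
  show "\<exists>m\<in>P. \<forall>p\<in>P. m \<le> p"
  proof (cases "P \<inter> A = {}")
    case True
    then have "P = {w}" using P by auto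
    then show ?thesis by simp
  next
    case False
    then obtain m where "m \<in> P \<inter> A" "\<forall>p\<in>P \<inter> A. m \<le> p"
      using assms(1) unfolding well_ordered_set_def by (meson inf_le2)
    then show ?thesis using P assms(2) by blast
  qed
qed

lemma well_ordered_set_subset: "well_ordered_set A \<Longrightarrow> B \<subseteq> A \<Longrightarrow> well_ordered_set B"
  unfolding well_ordered_set_def is_chain_def by (meson order.trans subsetD)

lemma a0_chainI:
  assumes "C \<subseteq> X" "well_ordered_set C" "a0 \<in> C" "\<And>c. c \<in> C \<Longrightarrow> a0 \<le> c"
    and "\<And>P. P \<subseteq> C \<Longrightarrow> P \<noteq> {} \<Longrightarrow> is_lub_in X P (lub_in X P) \<and> lub_in X P \<in> C"
    and "\<And>z. z \<in> C \<Longrightarrow> z \<noteq> lub_in X C \<Longrightarrow>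
      f z \<in> C \<and> z < f z \<and> (\<forall>y\<in>C. z < y \<longrightarrow> \<not> y < f z)"
  shows "a0_chain X f a0 C"
  unfolding a0_chain_def using assms by blast

context
  fixes X :: "'a::order set" and f :: "'a \<Rightarrow> 'a" and a0 :: 'a and C :: "'a set"
  assumes chain: "a0_chain X f a0 C"
begin

lemma a0_chain_subset: "C \<subseteq> X"
  and a0_chain_a0_mem: "a0 \<in> C"
  and a0_chain_a0_le: "c \<in> C \<Longrightarrow> a0 \<le> c"
  and a0_chain_well_ordered: "well_ordered_set C"
  using chain unfolding a0_chain_def by blast+

lemma a0_chain_is_chain: "is_chain C"
  using a0_chain_well_ordered unfolding well_ordered_set_def by blast

lemma a0_chain_le_total: "x \<in> C \<Longrightarrow> y \<in> C \<Longrightarrow> x \<le> y \<or> y \<le> x"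
  using a0_chain_is_chain unfolding is_chain_def by blast

lemma a0_chain_has_least: "P \<subseteq> C \<Longrightarrow> P \<noteq> {} \<Longrightarrow> \<exists>m\<in>P. \<forall>p\<in>P. m \<le> p"
  using a0_chain_well_ordered unfolding well_ordered_set_def by blast

lemma a0_chain_lub_closed:
  assumes "P \<subseteq> C" "P \<noteq> {}"
  shows "is_lub_in X P (lub_in X P)" "lub_in X P \<in> C"
  using chain assms is_lub_in_lub_in unfolding a0_chain_def by meson+

lemma a0_chain_top: "is_lub_in X C (lub_in X C)" "lub_in X C \<in> C"
  using a0_chain_lub_closed[of C] a0_chain_a0_mem by auto

lemma a0_chain_le_top: "c \<in> C \<Longrightarrow> c \<le> lub_in X C"
  by (rule is_lub_in_upper[OF a0_chain_top(1)])

lemma a0_chain_succ: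
  assumes "z \<in> C" "z \<noteq> lub_in X C"
  shows "f z \<in> C" "z < f z" "y \<in> C \<Longrightarrow> z < y \<Longrightarrow> \<not> y < f z"
  using chain assms unfolding a0_chain_def by blast+

lemma a0_chain_le_succ:
  assumes "z \<in> C" "z \<noteq> lub_in X C" "y \<in> C" "y \<le> f z"
  shows "y \<le> z \<or> y = f z"
proof (cases "z < y")
  case True
  then show ?thesis using a0_chain_succ(3)[OF assms(1,2,3)] assms(4) by (simp add: order.order_iff_strict)
qed (use a0_chain_le_total[OF assms(1,3)] in \<open>auto simp: order.order_iff_strict\<close>)

end

section \<open>Comparing \<open>a0\<close>-chains\<close>

definition initial_segment :: "'a::order set \<Rightarrow> 'a set \<Rightarrow> bool" where
  "initial_segment C D \<longleftrightarrow> C \<subseteq> D \<and> (\<forall>x\<in>C. \<forall>y\<in>D. y \<le> x \<longrightarrow> y \<in> C)"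

lemma initial_segment_if_agree_below:
  assumes "\<And>x. x \<in> C \<Longrightarrow> x \<le> s" "\<And>y. y \<le> s \<Longrightarrow> y \<in> C \<longleftrightarrow> y \<in> D"
  shows "initial_segment C D"
  unfolding initial_segment_def
proof (intro conjI ballI impI subsetI)
  show "x \<in> D" if "x \<in> C" for x using assms that by blast
  show "y \<in> C" if "x \<in> C" "y \<in> D" "y \<le> x" for x y
    using assms(2)[OF order.trans[OF that(3) assms(1)[OF that(1)]]] that(2) by blast
qed

lemma a0_chain_initial_segment_below:
  assumes C: "a0_chain X f a0 C" and c: "c \<in> C"
  shows "a0_chain X f a0 {x\<in>C. x \<le> c}" "lub_in X {x\<in>C. x \<le> c} = c"
proof -
  let ?S = "{x\<in>C. x \<le> c}"
  have cX: "c \<in> X" using a0_chain_subset[OF C] c by auto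
  have "is_lub_in X ?S c" by (rule is_lub_in_greatest) (use cX c in auto)
  then show lub: "lub_in X ?S = c" by (rule lub_in_eqI)
  show "a0_chain X f a0 ?S"
  proof (rule a0_chainI)
    show "?S \<subseteq> X" using a0_chain_subset[OF C] by blast
    show "a0 \<in> ?S" using a0_chain_a0_mem[OF C] a0_chain_a0_le[OF C c] by simp
    show "a0 \<le> x" if "x \<in> ?S" for x using a0_chain_a0_le[OF C] that by simp
    show "well_ordered_set ?S"
      by (rule well_ordered_set_subset[OF a0_chain_well_ordered[OF C]]) blast
    show "is_lub_in X P (lub_in X P) \<and> lub_in X P \<in> ?S" if "P \<subseteq> ?S" "P \<noteq> {}" for P
    proof -
      have "P \<subseteq> C" using that by auto
      note lubP = a0_chain_lub_closed[OF C this that(2)]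
      have "lub_in X P \<le> c" using is_lub_in_least[OF lubP(1) cX] that(1) by blast
      then show ?thesis using lubP by blast
    qed
    show "f z \<in> ?S \<and> z < f z \<and> (\<forall>y\<in>?S. z < y \<longrightarrow> \<not> y < f z)"
      if "z \<in> ?S" "z \<noteq> lub_in X ?S" for z
    proof -
      have zC: "z \<in> C" and "z < c" using that lub by auto
      have top: "z \<noteq> lub_in X C" using a0_chain_le_top[OF C c] \<open>z < c\<close> by auto
      note succ = a0_chain_succ[OF C zC top]
      have "f z \<le> c"
      proof (rule ccontr)
        assume "\<not> f z \<le> c"
        then have "c < f z" using a0_chain_le_total[OF C c succ(1)] less_le_not_le by blast
        then show False using succ(3)[OF c \<open>z < c\<close>] by contradiction
      qed
      then show ?thesis using succ by simp
    qed
  qed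
qed

text \<open>The classical comparison argument: let \<open>s\<close> be the lub of the set \<open>I\<close> of common elements
  below which both chains agree. Then \<open>s\<close> lies in both chains, and unless one chain ends at
  \<open>s\<close>, the common successor \<open>f s\<close> would again belong to \<open>I\<close>.\<close>

lemma a0_chains_comparable:
  assumes C: "a0_chain X f a0 C" and D: "a0_chain X f a0 D"
  shows "initial_segment C D \<or> initial_segment D C"
proof (rule ccontr)
  assume neg: "\<not> ?thesis"
  define I where "I = {x \<in> C \<inter> D. \<forall>y. y \<le> x \<longrightarrow> (y \<in> C \<longleftrightarrow> y \<in> D)}"
  have IC: "I \<subseteq> C" and ID: "I \<subseteq> D" unfolding I_def by auto
  have "a0 \<in> I"
    unfolding I_def
  proof (intro CollectI conjI IntI allI impI a0_chain_a0_mem[OF C] a0_chain_a0_mem[OF D])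
    fix y assume "y \<le> a0"
    then have "y = a0" if "y \<in> C \<or> y \<in> D"
      using that a0_chain_a0_le[OF C, of y] a0_chain_a0_le[OF D, of y] by (auto intro: order.antisym)
    then show "y \<in> C \<longleftrightarrow> y \<in> D" using a0_chain_a0_mem[OF C] a0_chain_a0_mem[OF D] by blast
  qed
  then have I_ne: "I \<noteq> {}" by auto
  define s where "s = lub_in X I"
  have lubI: "is_lub_in X I s" and sC: "s \<in> C" and sD: "s \<in> D"
    using a0_chain_lub_closed[OF C IC I_ne] a0_chain_lub_closed[OF D ID I_ne] s_def by auto
  have agree: "y \<in> C \<longleftrightarrow> y \<in> D" if "y \<le> s" for y
  proof (cases "y = s")
    case False
    then have "y < s" using that by auto
    then show ?thesis
      using chain_below_lub_le_member[OF a0_chain_is_chain[OF C] a0_chain_subset[OF C] IC lubI]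
        chain_below_lub_le_member[OF a0_chain_is_chain[OF D] a0_chain_subset[OF D] ID lubI]
      unfolding I_def by blast
  qed (use sC sD in simp)
  have "s \<noteq> lub_in X C"
  proof
    assume "s = lub_in X C"
    then have "initial_segment C D"
      using a0_chain_le_top[OF C] agree by (intro initial_segment_if_agree_below) auto
    with neg show False by blast
  qed
  moreover have "s \<noteq> lub_in X D"
  proof
    assume "s = lub_in X D"
    then have "initial_segment D C"
      using a0_chain_le_top[OF D] agree by (intro initial_segment_if_agree_below) auto
    with neg show False by blast
  qed
  ultimately have "f s \<in> I"
    using a0_chain_succ(1)[OF C sC] a0_chain_succ(1)[OF D sD]
      a0_chain_le_succ[OF C sC] a0_chain_le_succ[OF D sD] agree
    unfolding I_def by blast
  then have "f s \<le> s" by (rule is_lub_in_upper[OF lubI])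
  then show False using a0_chain_succ(2)[OF C sC \<open>s \<noteq> lub_in X C\<close>] by simp
qed

lemma a0_chain_insert_succ_top:
  assumes C: "a0_chain X f a0 C" and fX: "f (lub_in X C) \<in> X" and lt: "lub_in X C < f (lub_in X C)"
  shows "a0_chain X f a0 (insert (f (lub_in X C)) C)"
proof -
  let ?t = "lub_in X C"
  let ?E = "insert (f ?t) C"
  have below: "c < f ?t" if "c \<in> C" for c
    using a0_chain_le_top[OF C that] lt by (rule order.strict_trans1)
  have upper: "c \<le> f ?t" if "c \<in> ?E" for c
    using that below[THEN order.strict_implies_order] by blast
  have lub_ft: "is_lub_in X P (f ?t)" if "f ?t \<in> P" "P \<subseteq> ?E" for P
    by (rule is_lub_in_greatest[OF fX that(1)]) (use that(2) upper in blast)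
  have top: "lub_in X ?E = f ?t" using lub_ft lub_in_eqI by blast
  show ?thesis
  proof (rule a0_chainI)
    show "?E \<subseteq> X" using a0_chain_subset[OF C] fX by blast
    show "well_ordered_set ?E"
      by (rule well_ordered_set_insert_upper[OF a0_chain_well_ordered[OF C]]) (use upper in blast)
    show "a0 \<in> ?E" using a0_chain_a0_mem[OF C] by blast
    show "a0 \<le> c" if "c \<in> ?E" for c
      using that a0_chain_a0_le[OF C] upper[of a0] a0_chain_a0_mem[OF C] by blast
    show "is_lub_in X P (lub_in X P) \<and> lub_in X P \<in> ?E" if "P \<subseteq> ?E" "P \<noteq> {}" for P
    proof (cases "f ?t \<in> P")
      case True
      then show ?thesis using lub_ft[OF True that(1)] lub_in_eqI[OF lub_ft[OF True that(1)]] by simp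
    next
      case False
      then have "P \<subseteq> C" using that by auto
      then show ?thesis using a0_chain_lub_closed[OF C _ that(2)] by blast
    qed
    show "f z \<in> ?E \<and> z < f z \<and> (\<forall>y\<in>?E. z < y \<longrightarrow> \<not> y < f z)"
      if "z \<in> ?E" "z \<noteq> lub_in X ?E" for z
    proof (cases "z = ?t")
      case True
      then show ?thesis using lt by (auto dest: order.strict_trans2[OF _ a0_chain_le_top[OF C]])
    next
      case False
      have "z \<in> C" using that top by simp
      note succ = a0_chain_succ[OF C this False]
      have "f z \<le> ?t" using a0_chain_le_top[OF C succ(1)] .
      then show ?thesis using succ lt by (auto dest: order.strict_trans2)
    qed
  qed
qed

lemma a0_chain_singleton:
  assumes "a0 \<in> X"
  shows "a0_chain X f a0 {a0}"
proof (rule a0_chainI)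
  have lub: "is_lub_in X {a0} a0" using is_lub_in_greatest assms by blast
  then show "is_lub_in X P (lub_in X P) \<and> lub_in X P \<in> {a0}" if "P \<subseteq> {a0}" "P \<noteq> {}" for P
    using that lub_in_eqI[OF lub] by (auto simp: subset_singleton_iff)
  show "f z \<in> {a0} \<and> z < f z \<and> (\<forall>y\<in>{a0}. z < y \<longrightarrow> \<not> y < f z)"
    if "z \<in> {a0}" "z \<noteq> lub_in X {a0}" for z
    using that lub_in_eqI[OF lub] by simp
qed (use assms in \<open>auto simp: well_ordered_set_def is_chain_def subset_singleton_iff\<close>)

section \<open>The union of all \<open>a0\<close>-chains\<close>

definition a0_chain_Union :: "'a::order set \<Rightarrow> ('a \<Rightarrow> 'a) \<Rightarrow> 'a \<Rightarrow> 'a set" where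
  "a0_chain_Union X f a0 = \<Union>{C. a0_chain X f a0 C}"

lemma mem_a0_chain_Union_iff: "x \<in> a0_chain_Union X f a0 \<longleftrightarrow> (\<exists>C. a0_chain X f a0 C \<and> x \<in> C)"
  unfolding a0_chain_Union_def by blast

lemma lubs_of_a0_chains_eq_Union:
  "{x \<in> X. \<exists>C. a0_chain X f a0 C \<and> is_lub_in X C x} = a0_chain_Union X f a0"
proof (intro set_eqI iffI)
  fix x assume "x \<in> {x \<in> X. \<exists>C. a0_chain X f a0 C \<and> is_lub_in X C x}"
  then obtain C where "a0_chain X f a0 C" "lub_in X C = x" using lub_in_eqI by blast
  then show "x \<in> a0_chain_Union X f a0"
    using a0_chain_top(2) mem_a0_chain_Union_iff by metis
next
  fix x assume "x \<in> a0_chain_Union X f a0"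
  then obtain C where C: "a0_chain X f a0 C" "x \<in> C" using mem_a0_chain_Union_iff by metis
  note seg = a0_chain_initial_segment_below[OF C]
  show "x \<in> {x \<in> X. \<exists>C. a0_chain X f a0 C \<and> is_lub_in X C x}"
    using a0_chain_top(1)[OF seg(1)] seg a0_chain_subset[OF C(1)] C(2) by auto
qed

lemma a0_chain_Union_down_closed:
  assumes C: "a0_chain X f a0 C" and "x \<in> C" "y \<in> a0_chain_Union X f a0" "y \<le> x"
  shows "y \<in> C"
proof -
  obtain D where D: "a0_chain X f a0 D" "y \<in> D" using assms(3) mem_a0_chain_Union_iff by metis
  show ?thesis
    using a0_chains_comparable[OF C D(1)] assms(2,4) D(2) unfolding initial_segment_def by blast
qed

lemma is_chain_a0_chain_Union: "is_chain (a0_chain_Union X f a0)"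
  unfolding is_chain_def
proof (intro ballI)
  fix x y assume "x \<in> a0_chain_Union X f a0" "y \<in> a0_chain_Union X f a0"
  then obtain C D where C: "a0_chain X f a0 C" "x \<in> C" and D: "a0_chain X f a0 D" "y \<in> D"
    using mem_a0_chain_Union_iff by metis
  from a0_chains_comparable[OF C(1) D(1)] have "x \<in> D \<or> y \<in> C"
    using C(2) D(2) unfolding initial_segment_def by blast
  then show "x \<le> y \<or> y \<le> x" using a0_chain_le_total C D by blast
qed

lemma well_ordered_set_a0_chain_Union: "well_ordered_set (a0_chain_Union X f a0)"
  unfolding well_ordered_set_def
proof (intro conjI allI impI is_chain_a0_chain_Union)
  fix P assume P: "P \<subseteq> a0_chain_Union X f a0 \<and> P \<noteq> {}"
  then obtain p C where C: "a0_chain X f a0 C" "p \<in> C" "p \<in> P"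
    using mem_a0_chain_Union_iff by blast
  then obtain m where m: "m \<in> P \<inter> C" "\<forall>q\<in>P \<inter> C. m \<le> q"
    using a0_chain_has_least[OF C(1), of "P \<inter> C"] by blast
  have "m \<le> q" if "q \<in> P" for q
    using is_chain_a0_chain_Union m P that a0_chain_Union_down_closed[OF C(1), of m q]
    unfolding is_chain_def by blast
  then show "\<exists>m\<in>P. \<forall>q\<in>P. m \<le> q" using m by blast
qed

lemma a0_chain_Union_succ:
  assumes "z \<in> a0_chain_Union X f a0" "c \<in> a0_chain_Union X f a0" "z < c"
  shows "f z \<in> a0_chain_Union X f a0" "z < f z"
    "y \<in> a0_chain_Union X f a0 \<Longrightarrow> z < y \<Longrightarrow> \<not> y < f z"
proof -
  obtain C where C: "a0_chain X f a0 C" and "c \<in> C" using assms(2) mem_a0_chain_Union_iff by metis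
  have zC: "z \<in> C" using a0_chain_Union_down_closed[OF C \<open>c \<in> C\<close> assms(1)] assms(3) by simp
  have "z \<noteq> lub_in X C" using a0_chain_le_top[OF C \<open>c \<in> C\<close>] assms(3) by auto
  note succ = a0_chain_succ[OF C zC this]
  show "f z \<in> a0_chain_Union X f a0" using succ(1) C mem_a0_chain_Union_iff by blast
  show "z < f z" by (fact succ(2))
  show "\<not> y < f z" if "y \<in> a0_chain_Union X f a0" "z < y"
  proof
    assume "y < f z"
    then have "y \<in> C" using a0_chain_Union_down_closed[OF C succ(1) that(1)] by simp
    then show False using succ(3) that(2) \<open>y < f z\<close> by blast
  qed
qed

lemma a0_chain_Union_subset: "a0_chain_Union X f a0 \<subseteq> X"
  using a0_chain_subset mem_a0_chain_Union_iff by blast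

lemma a0_chain_Union_lub_closed:
  assumes w: "is_lub_in X (a0_chain_Union X f a0) w"
    and P: "P \<subseteq> a0_chain_Union X f a0" "P \<noteq> {}"
  shows "is_lub_in X P (lub_in X P) \<and> lub_in X P \<in> insert w (a0_chain_Union X f a0)"
proof (cases "\<exists>c\<in>a0_chain_Union X f a0. \<forall>p\<in>P. p \<le> c")
  case True
  then obtain c C where c: "\<forall>p\<in>P. p \<le> c" and C: "a0_chain X f a0 C" "c \<in> C"
    using mem_a0_chain_Union_iff by metis
  have "P \<subseteq> C" using a0_chain_Union_down_closed[OF C] c P(1) by blast
  then show ?thesis
    using a0_chain_lub_closed[OF C(1) _ P(2)] C(1) mem_a0_chain_Union_iff by blast
next
  case False
  then have "is_lub_in X P w" using is_lub_in_cofinal[OF w is_chain_a0_chain_Union P(1)] by blast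
  then show ?thesis by (simp add: lub_in_eqI)
qed

lemma a0_chain_Union_not_lub_has_greater:
  assumes w: "is_lub_in X (a0_chain_Union X f a0) w" and z: "z \<in> a0_chain_Union X f a0" "z \<noteq> w"
  shows "\<exists>c\<in>a0_chain_Union X f a0. z < c"
proof -
  have "\<exists>c\<in>a0_chain_Union X f a0. \<not> c \<le> z"
  proof (rule ccontr)
    assume "\<not> ?thesis"
    then have "w \<le> z" using is_lub_in_least[OF w] z(1) a0_chain_Union_subset by blast
    then show False using is_lub_in_upper[OF w z(1)] z(2) by simp
  qed
  then show ?thesis
    using is_chain_a0_chain_Union z(1) unfolding is_chain_def by (metis order.order_iff_strict)
qed

lemma a0_chain_insert_lub_Union:
  assumes a0: "a0 \<in> X" and w: "is_lub_in X (a0_chain_Union X f a0) w"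
  shows "a0_chain X f a0 (insert w (a0_chain_Union X f a0))"
proof -
  let ?U = "a0_chain_Union X f a0"
  have upper: "c \<le> w" if "c \<in> ?U" for c using is_lub_in_upper[OF w that] .
  have wX: "w \<in> X" using w unfolding is_lub_in_def by blast
  have a0U: "a0 \<in> ?U" using a0_chain_singleton[OF a0] mem_a0_chain_Union_iff by blast
  have top: "lub_in X (insert w ?U) = w"
    by (rule lub_in_eqI, rule is_lub_in_greatest[OF wX]) (use upper in auto)
  show ?thesis
  proof (rule a0_chainI)
    show "insert w ?U \<subseteq> X" using wX a0_chain_Union_subset by blast
    show "well_ordered_set (insert w ?U)"
      by (rule well_ordered_set_insert_upper[OF well_ordered_set_a0_chain_Union]) (use upper in blast)
    show "a0 \<in> insert w ?U" using a0U by blast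
    show "a0 \<le> c" if "c \<in> insert w ?U" for c
      using that upper[OF a0U] a0_chain_a0_le mem_a0_chain_Union_iff by blast
    show "is_lub_in X P (lub_in X P) \<and> lub_in X P \<in> insert w ?U"
      if "P \<subseteq> insert w ?U" "P \<noteq> {}" for P
    proof (cases "w \<in> P")
      case True
      then have "is_lub_in X P w" using is_lub_in_greatest[OF wX] that(1) upper by blast
      then show ?thesis by (simp add: lub_in_eqI)
    next
      case False
      then show ?thesis using a0_chain_Union_lub_closed[OF w _ that(2)] that(1) by blast
    qed
    show "f z \<in> insert w ?U \<and> z < f z \<and> (\<forall>y\<in>insert w ?U. z < y \<longrightarrow> \<not> y < f z)"
      if "z \<in> insert w ?U" "z \<noteq> lub_in X (insert w ?U)" for z
    proof -
      have zU: "z \<in> ?U" and "z \<noteq> w" using that top by auto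
      obtain c where "c \<in> ?U" "z < c" using a0_chain_Union_not_lub_has_greater[OF w zU] \<open>z \<noteq> w\<close> by blast
      note succ = a0_chain_Union_succ[OF zU this]
      have "\<not> w < f z" using upper[OF succ(1)] by simp
      then show ?thesis using succ by blast
    qed
  qed
qed

lemma a0_chain_Union_is_a0_chain:
  assumes "strictly_inductive X" "a0 \<in> X"
  shows "a0_chain X f a0 (a0_chain_Union X f a0)"
proof -
  let ?U = "a0_chain_Union X f a0"
  have "a0 \<in> ?U" using a0_chain_singleton[OF assms(2)] mem_a0_chain_Union_iff by blast
  then have "?U \<subseteq> X \<and> ?U \<noteq> {} \<and> is_chain ?U"
    using a0_chain_Union_subset is_chain_a0_chain_Union by blast
  then obtain w where w: "is_lub_in X ?U w"
    using assms(1) unfolding strictly_inductive_def by blast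
  note chain = a0_chain_insert_lub_Union[OF assms(2) w]
  then have "w \<in> ?U" using mem_a0_chain_Union_iff by blast
  then show ?thesis using chain by (simp add: insert_absorb)
qed

text \<open>If the top \<open>t\<close> of the chain is a limit, every element below it satisfies
  \<open>c < f c \<le> f t\<close>; otherwise \<open>t = f l \<le> f t\<close> for its predecessor \<open>l\<close>.\<close>

lemma a0_chain_lub_le_f_lub:
  assumes C: "a0_chain X f a0 C" and "a0 \<le> f a0" "f (lub_in X C) \<in> X" "mono_on C f"
  shows "lub_in X C \<le> f (lub_in X C)"
proof -
  let ?t = "lub_in X C"
  let ?P = "C - {?t}"
  have tC: "?t \<in> C" by (rule a0_chain_top(2)[OF C])
  have f_le: "f c \<le> f ?t" if "c \<in> C" for c
    using mono_onD[OF assms(4) that tC a0_chain_le_top[OF C that]] .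
  show ?thesis
  proof (cases "?P = {}")
    case True
    then have "?t = a0" using a0_chain_a0_mem[OF C] by blast
    then show ?thesis using assms(2) by simp
  next
    case False
    note lubP = a0_chain_lub_closed[OF C Diff_subset False]
    let ?l = "lub_in X ?P"
    have succ: "f c \<in> C" "c < f c" if "c \<in> ?P" for c using a0_chain_succ[OF C] that by auto
    show ?thesis
    proof (cases "?l = ?t")
      case True
      have "c \<le> f ?t" if "c \<in> ?P" for c
        using order.trans[OF order.strict_implies_order[OF succ(2)[OF that]] f_le] that by blast
      then have "?l \<le> f ?t" by (rule is_lub_in_least[OF lubP(1) assms(3)])
      then show ?thesis using True by simp
    next
      case False
      then have lP: "?l \<in> ?P" using lubP(2) by blast
      have "f ?l \<notin> ?P"
      proof
        assume "f ?l \<in> ?P"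
        then have "f ?l \<le> ?l" by (rule is_lub_in_upper[OF lubP(1)])
        then show False using succ(2)[OF lP] by simp
      qed
      then have "f ?l = ?t" using succ(1)[OF lP] by blast
      then show ?thesis using f_le[of ?l] lP by simp
    qed
  qed
qed

theorem mainTheorem3:
  fixes X :: "'a::order set" and f :: "'a \<Rightarrow> 'a" and a0 :: 'a
  assumes "X \<noteq> {}"
    and "strictly_inductive X"
    and "\<forall>x\<in>X. f x \<in> X"
    and "a0 \<in> X"
    and "a0 \<le> f a0"
    and "W = {x \<in> X. \<exists>C. a0_chain X f a0 C \<and> is_lub_in X C x}"
    and "\<forall>x\<in>W. \<forall>y\<in>W. x \<le> y \<longrightarrow> f x \<le> f y"
  shows "(\<exists>w. is_lub_in X W w) \<and> f (lub_in X W) = lub_in X W"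
proof -
  have W: "W = a0_chain_Union X f a0" using assms(6) lubs_of_a0_chains_eq_Union by simp
  have chain: "a0_chain X f a0 W" using a0_chain_Union_is_a0_chain[OF assms(2,4)] W by simp
  let ?t = "lub_in X W"
  have ftX: "f ?t \<in> X" using assms(3) a0_chain_subset[OF chain] a0_chain_top(2)[OF chain] by blast
  have "mono_on W f" using assms(7) by (simp add: monotone_on_def)
  then have "?t \<le> f ?t" using a0_chain_lub_le_f_lub[OF chain assms(5) ftX] by blast
  moreover have "\<not> ?t < f ?t"
  proof
    assume "?t < f ?t"
    then have "f ?t \<in> W"
      using a0_chain_insert_succ_top[OF chain ftX] W mem_a0_chain_Union_iff by blast
    then show False using a0_chain_le_top[OF chain] \<open>?t < f ?t\<close> by (blast dest: order.strict_trans2)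
  qed
  ultimately show ?thesis using a0_chain_top(1)[OF chain] by (auto simp: order.order_iff_strict)
qed

end
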